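(* Let $n\in\mathbb{N}$, let $m\leqslant n$, let $\alpha_k>0$ and $\beta_k>0$ for $k=1,\ldots,m$, and let $0\leqslant\varphi_1<\ldots<\varphi_m<2\pi$. Put \[ h(z)\coloneq\sum_{k=1}^m\alpha_k\frac{1+e^{i\varphi_k}z}{1-e^{i\varphi_k}z},\qquad f\coloneq e^{-h},\qquad g(z)\coloneq\sum_{k=1}^m\beta_k\frac{1+e^{i\varphi_k}z}{1-e^{i\varphi_k}z}, \] and let $H(z)\coloneq\{f\}_n+2\{f\}_{n-1}z+2\{f\}_{n-2}z^2+\ldots+2\{f\}_0z^n$. Assume that $\operatorname{Re}H(z)>0$ for all $z\in\Delta$. Then \[ \operatorname{Re}\bigl(\{f\}_n\{g\}_0+\{f\}_{n-1}\{g\}_1+\ldots+\{f\}_0\{g\}_n\bigr)=0 \] holds if and only if $\operatorname{Re}H(e^{i\varphi_k})=0$ for all $k=1,\ldots,m$.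
   Context: $\Delta=\{z\in\mathbb{C}:|z|<1\}$ is the open unit disk. For a function $f$ holomorphic in $\Delta$, $\{f\}_j$ denotes its $j$-th Taylor coefficient at $0$, i.e. $f(z)=\sum_{j\geqslant0}\{f\}_jz^j$. *)

theory Defs
  imports "HOL-Complex_Analysis.Complex_Analysis"
begin

definition taylor_coeff :: "(complex \<Rightarrow> complex) \<Rightarrow> nat \<Rightarrow> complex" where
  "taylor_coeff f j = (deriv ^^ j) f 0 / of_nat (fact j)"

end

theory Submission
  imports Defs
begin

text \<open>The Herglotz kernel (1 + c z)/(1 - c z) has Taylor coefficients 1, 2c, 2c^2, ..., so
  with zeta_k = exp (i phi_k) the coefficients of g are sum beta_k and 2 sum beta_k zeta_k^j.
  Hence the convolution sum {f}_(n-j) {g}_j equals sum beta_k H(zeta_k). Since H is a polynomial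
  with positive real part in the open disc, continuity gives Re H(zeta_k) >= 0 on the unit
  circle, and a positive combination of non-negative numbers vanishes exactly when every term
  does.\<close>

definition herglotz_kernel_fps :: "complex \<Rightarrow> complex fps" where
  "herglotz_kernel_fps c = Abs_fps (\<lambda>j. if j = 0 then 1 else 2 * c ^ j)"

lemma herglotz_kernel_fps_times:
  "herglotz_kernel_fps c * (1 - fps_const c * fps_X) = 1 + fps_const c * fps_X"
proof (rule fps_ext)
  fix j
  show "(herglotz_kernel_fps c * (1 - fps_const c * fps_X)) $ j = (1 + fps_const c * fps_X) $ j"
  proof (cases j)
    case 0
    then show ?thesis by (simp add: herglotz_kernel_fps_def)
  next
    case (Suc i)
    have "(herglotz_kernel_fps c * (1 - fps_const c * fps_X)) $ j
          = herglotz_kernel_fps c $ j - c * herglotz_kernel_fps c $ i"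
      by (simp add: Suc right_diff_distrib mult.assoc[symmetric] del: fps_X_mult_right_nth)
        (simp add: fps_X_mult_right_nth)
    then show ?thesis by (cases i) (auto simp: Suc herglotz_kernel_fps_def)
  qed
qed

lemma has_fps_expansion_herglotz_kernel:
  "(\<lambda>z. (1 + c * z) / (1 - c * z)) has_fps_expansion herglotz_kernel_fps c"
proof -
  have "(\<lambda>z. (1 + c * z) / (1 - c * z)) has_fps_expansion
          (1 + fps_const c * fps_X) / (1 - fps_const c * fps_X)"
    by (intro fps_expansion_intros) auto
  moreover have "1 - fps_const c * fps_X \<noteq> 0"
    by (auto dest: arg_cong[where f="\<lambda>F. fps_nth F 0"])
  ultimately show ?thesis
    by (simp flip: herglotz_kernel_fps_times)
qed

lemma taylor_coeff_eq_fps_nth: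
  "f has_fps_expansion F \<Longrightarrow> taylor_coeff f j = F $ j"
  by (simp add: taylor_coeff_def fps_nth_fps_expansion)

lemma taylor_coeff_herglotz_sum:
  fixes b c :: "'a \<Rightarrow> complex"
  shows "taylor_coeff (\<lambda>z. \<Sum>k\<in>K. b k * ((1 + c k * z) / (1 - c k * z))) j
         = (\<Sum>k\<in>K. b k * herglotz_kernel_fps (c k) $ j)"
proof -
  have "(\<lambda>z. \<Sum>k\<in>K. b k * ((1 + c k * z) / (1 - c k * z)))
          has_fps_expansion (\<Sum>k\<in>K. fps_const (b k) * herglotz_kernel_fps (c k))"
    by (intro fps_expansion_intros has_fps_expansion_herglotz_kernel)
  then show ?thesis
    by (simp add: taylor_coeff_eq_fps_nth fps_sum_nth)
qed

lemma convolution_herglotz_kernel_fps: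
  "(\<Sum>j=0..n. a (n - j) * herglotz_kernel_fps c $ j) = a n + (\<Sum>j=1..n. 2 * a (n - j) * c ^ j)"
  by (simp add: sum.atLeast_Suc_atMost herglotz_kernel_fps_def mult_ac)

lemma sum_pos_weights_eq_0_iff:
  fixes w x :: "'a \<Rightarrow> real"
  assumes "finite K" and "\<forall>k\<in>K. w k > 0" and "\<forall>k\<in>K. x k \<ge> 0"
  shows "(\<Sum>k\<in>K. w k * x k) = 0 \<longleftrightarrow> (\<forall>k\<in>K. x k = 0)"
  using assms by (subst sum_nonneg_eq_0_iff) (auto, force)

theorem theorem3:
  fixes n m :: nat and \<alpha> \<beta> \<phi> :: "nat \<Rightarrow> real"
    and h f g H :: "complex \<Rightarrow> complex"
  assumes "m \<le> n"
    and "\<forall>k\<in>{1..m}. \<alpha> k > 0 \<and> \<beta> k > 0"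
    and "\<forall>k\<in>{1..m}. 0 \<le> \<phi> k \<and> \<phi> k < 2 * pi"
    and "\<forall>k. 1 \<le> k \<and> k < m \<longrightarrow> \<phi> k < \<phi> (Suc k)"
    and h_def: "h = (\<lambda>z. \<Sum>k=1..m. complex_of_real (\<alpha> k) *
                   ((1 + exp (\<i> * \<phi> k) * z) / (1 - exp (\<i> * \<phi> k) * z)))"
    and f_def: "f = (\<lambda>z. exp (- h z))"
    and g_def: "g = (\<lambda>z. \<Sum>k=1..m. complex_of_real (\<beta> k) *
                   ((1 + exp (\<i> * \<phi> k) * z) / (1 - exp (\<i> * \<phi> k) * z)))"
    and H_def: "H = (\<lambda>z. taylor_coeff f n + (\<Sum>j=1..n. 2 * taylor_coeff f (n - j) * z ^ j))"
    and "\<forall>z. norm z < 1 \<longrightarrow> Re (H z) > 0"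
  shows "Re (\<Sum>j=0..n. taylor_coeff f (n - j) * taylor_coeff g j) = 0 \<longleftrightarrow>
         (\<forall>k\<in>{1..m}. Re (H (exp (\<i> * \<phi> k))) = 0)"
proof -
  define \<zeta> where "\<zeta> k = exp (\<i> * complex_of_real (\<phi> k))" for k
  have "(\<Sum>j=0..n. taylor_coeff f (n - j) * taylor_coeff g j)
        = (\<Sum>k=1..m. \<beta> k * (\<Sum>j=0..n. taylor_coeff f (n - j) * herglotz_kernel_fps (\<zeta> k) $ j))"
    unfolding g_def \<zeta>_def taylor_coeff_herglotz_sum
    by (simp add: sum_distrib_left sum_distrib_right mult_ac) (rule sum.swap)
  also have "\<dots> = (\<Sum>k=1..m. \<beta> k * H (\<zeta> k))"
    by (simp add: H_def convolution_herglotz_kernel_fps)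
  finally have convolution_eq: "Re (\<Sum>j=0..n. taylor_coeff f (n - j) * taylor_coeff g j)
                                = (\<Sum>k=1..m. \<beta> k * Re (H (\<zeta> k)))"
    by (simp add: Re_sum)
  have "continuous_on (closure (ball 0 1)) (\<lambda>z. Re (H z))"
    unfolding H_def by (intro continuous_intros)
  moreover have "\<zeta> k \<in> closure (ball 0 1)" for k
    by (simp add: \<zeta>_def norm_exp_i_times)
  ultimately have "Re (H (\<zeta> k)) \<ge> 0" for k
    using assms(9) continuous_ge_on_closure[of "ball 0 1" "\<lambda>z. Re (H z)"]
    by (simp add: less_imp_le)
  then show ?thesis
    using assms(2) unfolding convolution_eq \<zeta>_def
    by (subst sum_pos_weights_eq_0_iff) auto
qed

end
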